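(* Let $G:=|\cdot|$ on $\mathbb{R}$ and $(x^*,q^* )\in\operatorname{graph}\partial G$. Then for every $\gamma>0$, for all $x\in\big[(-1-q^* )/\gamma,\,(1-q^* )/\gamma\big]$ and all $q\in\partial G(x)$, \[ \inf_{\bar x\in(\partial G)^{-1}(q^* )}(q-q^* )(x-\bar x)\ge\gamma\operatorname{dist}^2(x,(\partial G)^{-1}(q^* )), \] i.e. $\partial G$ is $(I,\gamma I)$-strongly submonotone with the set $\mathcal{U}=[(-1-q^* )/\gamma,(1-q^* )/\gamma]$.
   Context: $\partial G$ is the convex subdifferential of the absolute value ($\partial G(x)=\{\operatorname{sign}x\}$ for $x\ne0$, $\partial G(0)=[-1,1]$); $(\partial G)^{-1}(q^* )=\{x:q^*\in\partial G(x)\}$; $\operatorname{dist}(x,A)=\inf_{a\in A}|x-a|$. *)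

theory Defs
  imports "HOL-Analysis.Analysis"
begin

definition subdiff_abs :: "real \<Rightarrow> real set" where
  "subdiff_abs x = (if x = 0 then {-1..1} else {sgn x})"

definition subdiff_abs_inv :: "real \<Rightarrow> real set" where
  "subdiff_abs_inv q = {x. q \<in> subdiff_abs x}"

end

theory Submission
  imports Defs
begin

text \<open>Since \<open>0 \<in> (\<partial>G)\<^sup>-\<^sup>1(q\<^sup>*)\<close>, the squared distance is at most \<open>x\<^sup>2\<close>. Every \<open>x\<^sub>0\<close> in
  \<open>(\<partial>G)\<^sup>-\<^sup>1(q\<^sup>*)\<close> satisfies \<open>q\<^sup>* x\<^sub>0 = \<bar>x\<^sub>0\<bar> \<ge> q x\<^sub>0\<close>, so the infimum is attained at
  \<open>x\<^sub>0 = 0\<close> and equals \<open>(q - q\<^sup>*) x = \<bar>x\<bar> - q\<^sup>* x\<close>; on the interval \<open>\<U>\<close> this is at least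
  \<open>\<gamma> x\<^sup>2\<close> because \<open>\<gamma> \<bar>x\<bar> \<le> 1 - q\<^sup>* sgn x\<close> there.\<close>

lemma subdiff_abs_mult_eq_abs: "q \<in> subdiff_abs x \<Longrightarrow> q * x = \<bar>x\<bar>"
  by (auto simp: subdiff_abs_def sgn_if split: if_splits)

lemma abs_le_one_if_subdiff_abs: "q \<in> subdiff_abs x \<Longrightarrow> \<bar>q\<bar> \<le> 1"
  by (auto simp: subdiff_abs_def sgn_if split: if_splits)

lemma zero_mem_subdiff_abs_inv: "\<bar>q\<bar> \<le> 1 \<Longrightarrow> 0 \<in> subdiff_abs_inv q"
  by (auto simp: subdiff_abs_inv_def subdiff_abs_def)

lemma infdist_subdiff_abs_inv_le_abs:
  "\<bar>q\<bar> \<le> 1 \<Longrightarrow> infdist x (subdiff_abs_inv q) \<le> \<bar>x\<bar>"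
  using infdist_le[OF zero_mem_subdiff_abs_inv] by (simp add: dist_real_def)

lemma mult_le_of_mem_subdiff_abs_inv:
  assumes "x \<in> subdiff_abs_inv qs" and "\<bar>q\<bar> \<le> 1"
  shows "q * x \<le> qs * x"
proof -
  have "q * x \<le> \<bar>q\<bar> * \<bar>x\<bar>"
    by (metis abs_ge_self abs_mult)
  also have "\<dots> \<le> \<bar>x\<bar>"
    using assms(2) mult_right_mono[of "\<bar>q\<bar>" 1 "\<bar>x\<bar>"] by simp
  also have "\<dots> = qs * x"
    using assms(1) subdiff_abs_mult_eq_abs by (simp add: subdiff_abs_inv_def)
  finally show ?thesis .
qed

lemma abs_minus_mult_ge_square:
  fixes qs \<gamma> x :: real
  assumes "-1 - qs \<le> \<gamma> * x" and "\<gamma> * x \<le> 1 - qs"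
  shows "\<gamma> * x\<^sup>2 \<le> \<bar>x\<bar> - qs * x"
proof (cases "x \<ge> 0")
  case True
  then have "x * (\<gamma> * x) \<le> x * (1 - qs)"
    using assms(2) mult_left_mono by blast
  with True show ?thesis
    by (simp add: power2_eq_square algebra_simps)
next
  case False
  then have "x * (-1 - qs) \<ge> x * (\<gamma> * x)"
    using assms(1) mult_left_mono_neg[of "-1 - qs" "\<gamma> * x" x] by simp
  with False show ?thesis
    by (simp add: power2_eq_square algebra_simps)
qed

theorem lemma5p11:
  fixes xs qs \<gamma> x q :: real
  assumes "qs \<in> subdiff_abs xs"
    and "\<gamma> > 0"
    and "x \<in> {(-1 - qs) / \<gamma> .. (1 - qs) / \<gamma>}"
    and "q \<in> subdiff_abs x"
  shows "(INF xb\<in>subdiff_abs_inv qs. (q - qs) * (x - xb)) \<ge> \<gamma> * (infdist x (subdiff_abs_inv qs))\<^sup>2"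
proof -
  have qs: "\<bar>qs\<bar> \<le> 1" and q: "\<bar>q\<bar> \<le> 1"
    using assms(1,4) abs_le_one_if_subdiff_abs by auto
  have "-1 - qs \<le> \<gamma> * x" "\<gamma> * x \<le> 1 - qs"
    using assms(2,3) by (auto simp: field_simps)
  then have lower: "\<gamma> * x\<^sup>2 \<le> (q - qs) * x"
    using abs_minus_mult_ge_square subdiff_abs_mult_eq_abs[OF assms(4)]
    by (simp add: left_diff_distrib)
  have "(infdist x (subdiff_abs_inv qs))\<^sup>2 \<le> x\<^sup>2"
    using power_mono[OF infdist_subdiff_abs_inv_le_abs[OF qs, of x] infdist_nonneg, of 2] by simp
  then have "\<gamma> * (infdist x (subdiff_abs_inv qs))\<^sup>2 \<le> \<gamma> * x\<^sup>2"
    using assms(2) by simp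
  also have "\<dots> \<le> (INF xb\<in>subdiff_abs_inv qs. (q - qs) * (x - xb))"
  proof (rule cINF_greatest)
    show "subdiff_abs_inv qs \<noteq> {}"
      using zero_mem_subdiff_abs_inv[OF qs] by blast
    show "\<gamma> * x\<^sup>2 \<le> (q - qs) * (x - xb)" if "xb \<in> subdiff_abs_inv qs" for xb
      using lower mult_le_of_mem_subdiff_abs_inv[OF that q] by (simp add: algebra_simps)
  qed
  finally show ?thesis .
qed

end
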